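(* Let $A$ be a monotonic modal algebra and let $S$ be a countable subset of $\mathcal{P}(A)$. Let $J_S(A)=\langle Q_S(A),\mathcal{V}_A\rangle$, where for each $F\in Q_S(A)$ $$\mathcal{V}_A(F)=\mathord{\uparrow}\bigl\{\{G\in Q_S(A)\mid x\in G\}\;\bigm|\; x\in A,\ \Box x\in F\bigr\},$$ the upward closure being taken in $\mathcal{P}(Q_S(A))$ ordered by inclusion. Then $J_S(A)$ is a monotonic neighborhood frame. Moreover, if $A$ is topped then $J_S(A)$ is topped, and if $A$ is cufi then $J_S(A)$ is cufi.
   Context: A modal algebra is a structure $\langle A;\lor,\land,-,\Box,0,1\rangle$ whose reduct $\langle A;\lor,\land,-,0,1\rangle$ is a Boolean algebra and $\Box$ is an arbitrary unary operation on $A$. It is monotonic if $\Box(x\land y)\le \Box x\land\Box y$ for all $x,y$ (equivalently $x\le y\Rightarrow \Box x\le\Box y$); topped if $\Box 1=1$; cufi if $\Box x\land\Box y\le\Box(x\land y)$ for all $x,y$. A prime filter of a Boolean algebra is a proper filter $F$ ($0\notin F$) such that $x\lor y\in F$ implies $x\in F$ or $y\in F$. For $S\subseteq\mathcal{P}(A)$, a Q-filter for $S$ is a prime filter $F$ such that for every $X\in S$: if the meet $\bigwedge X$ exists in $A$ and $X\subseteq F$, then $\bigwedge X\in F$. $Q_S(A)$ denotes the set of all Q-filters for $S$. A neighborhood frame is a pair $\langle C,\mathcal{V}\rangle$ with $C$ a non-empty set and $\mathcal{V}:C\to\mathcal{P}(\mathcal{P}(C))$. It is monotonic if for every $c\in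 C$, $\mathcal{V}(c)$ is upward closed under $\subseteq$ in $\mathcal{P}(C)$; topped if $C\in\mathcal{V}(c)$ for every $c$; cufi (closed under finite intersections) if for every $c$ and every non-empty finite $T\subseteq\mathcal{V}(c)$, $\bigcap T\in\mathcal{V}(c)$. *)

theory Defs
  imports Main "HOL-Library.Countable_Set"
begin

text \<open>Modal algebras: a Boolean algebra (type class boolean_algebra on type 'a, the whole
  type being the carrier A) together with an arbitrary unary operation box.\<close>

definition monotonic_ma :: "('a::boolean_algebra \<Rightarrow> 'a) \<Rightarrow> bool" where
  "monotonic_ma box \<longleftrightarrow> (\<forall>x y. box (inf x y) \<le> inf (box x) (box y))"

definition topped_ma :: "('a::boolean_algebra \<Rightarrow> 'a) \<Rightarrow> bool" where
  "topped_ma box \<longleftrightarrow> box top = top"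

definition cufi_ma :: "('a::boolean_algebra \<Rightarrow> 'a) \<Rightarrow> bool" where
  "cufi_ma box \<longleftrightarrow> (\<forall>x y. inf (box x) (box y) \<le> box (inf x y))"

definition is_filter :: "'a::boolean_algebra set \<Rightarrow> bool" where
  "is_filter F \<longleftrightarrow> F \<noteq> {} \<and> (\<forall>x y. x \<in> F \<and> x \<le> y \<longrightarrow> y \<in> F)
     \<and> (\<forall>x y. x \<in> F \<and> y \<in> F \<longrightarrow> inf x y \<in> F)"

definition prime_filter :: "'a::boolean_algebra set \<Rightarrow> bool" where
  "prime_filter F \<longleftrightarrow> is_filter F \<and> bot \<notin> F \<and> (\<forall>x y. sup x y \<in> F \<longrightarrow> x \<in> F \<or> y \<in> F)"

definition is_meet :: "'a::boolean_algebra set \<Rightarrow> 'a \<Rightarrow> bool" where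
  "is_meet X m \<longleftrightarrow> (\<forall>x\<in>X. m \<le> x) \<and> (\<forall>y. (\<forall>x\<in>X. y \<le> x) \<longrightarrow> y \<le> m)"

definition Q_filter :: "'a::boolean_algebra set set \<Rightarrow> 'a set \<Rightarrow> bool" where
  "Q_filter S F \<longleftrightarrow> prime_filter F \<and>
     (\<forall>X\<in>S. \<forall>m. is_meet X m \<and> X \<subseteq> F \<longrightarrow> m \<in> F)"

definition Q_S :: "'a::boolean_algebra set set \<Rightarrow> 'a set set" where
  "Q_S S = {F. Q_filter S F}"

definition V_A :: "('a::boolean_algebra \<Rightarrow> 'a) \<Rightarrow> 'a set set \<Rightarrow> 'a set \<Rightarrow> 'a set set set" where
  "V_A box S F = {U. U \<subseteq> Q_S S \<and> (\<exists>x. box x \<in> F \<and> {G \<in> Q_S S. x \<in> G} \<subseteq> U)}"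

definition nbhd_frame :: "'c set \<Rightarrow> ('c \<Rightarrow> 'c set set) \<Rightarrow> bool" where
  "nbhd_frame C V \<longleftrightarrow> C \<noteq> {} \<and> (\<forall>c\<in>C. V c \<subseteq> Pow C)"

definition monotonic_frame :: "'c set \<Rightarrow> ('c \<Rightarrow> 'c set set) \<Rightarrow> bool" where
  "monotonic_frame C V \<longleftrightarrow> nbhd_frame C V \<and>
     (\<forall>c\<in>C. \<forall>U\<in>V c. \<forall>W. U \<subseteq> W \<and> W \<subseteq> C \<longrightarrow> W \<in> V c)"

definition topped_frame :: "'c set \<Rightarrow> ('c \<Rightarrow> 'c set set) \<Rightarrow> bool" where
  "topped_frame C V \<longleftrightarrow> nbhd_frame C V \<and> (\<forall>c\<in>C. C \<in> V c)"

definition cufi_frame :: "'c set \<Rightarrow> ('c \<Rightarrow> 'c set set) \<Rightarrow> bool" where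
  "cufi_frame C V \<longleftrightarrow> nbhd_frame C V \<and>
     (\<forall>c\<in>C. \<forall>T. finite T \<and> T \<noteq> {} \<and> T \<subseteq> V c \<longrightarrow> \<Inter>T \<in> V c)"

end

theory Submission
  imports Defs
begin

text \<open>The only nontrivial point is that \<open>Q_S S\<close> is nonempty; this is a Rasiowa--Sikorski
  argument. Enumerate \<open>S\<close> as \<open>X 0, X 1, \<dots>\<close> and build a descending chain of nonzero elements
  \<open>a\<^sub>0 \<ge> a\<^sub>1 \<ge> \<dots>\<close>: if \<open>a\<^sub>n\<close> lies below every element of \<open>X n\<close> keep it, otherwise pass to
  \<open>a\<^sub>n \<sqinter> -x\<close> for some \<open>x \<in> X n\<close> with \<open>a\<^sub>n \<sqinter> -x \<noteq> 0\<close>. Any prime filter containing the whole chain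
  is a Q-filter: either it contains a lower bound of \<open>X n\<close>, hence its meet, or it omits some
  \<open>x \<in> X n\<close>. Such a prime filter exists by Zorn's lemma. The frame conditions then follow
  directly from the definition of \<open>V_A\<close>; upward closure holds by construction.\<close>

lemma is_filter_top: "is_filter F \<Longrightarrow> top \<in> F"
  unfolding is_filter_def by auto

lemma is_filter_mono: "is_filter F \<Longrightarrow> x \<in> F \<Longrightarrow> x \<le> y \<Longrightarrow> y \<in> F"
  unfolding is_filter_def by blast

lemma is_filter_inf: "is_filter F \<Longrightarrow> x \<in> F \<Longrightarrow> y \<in> F \<Longrightarrow> inf x y \<in> F"
  unfolding is_filter_def by blast

lemma is_filter_inf_iff: "is_filter F \<Longrightarrow> inf x y \<in> F \<longleftrightarrow> x \<in> F \<and> y \<in> F"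
  using is_filter_mono is_filter_inf by (metis inf.cobounded1 inf.cobounded2)

lemma Q_S_is_filter: "F \<in> Q_S S \<Longrightarrow> is_filter F"
  unfolding Q_S_def Q_filter_def prime_filter_def by simp

lemma is_filter_extend:
  assumes "is_filter M"
  shows "is_filter {z. \<exists>f\<in>M. inf f x \<le> z}"
proof -
  have "inf a b \<in> {z. \<exists>f\<in>M. inf f x \<le> z}"
    if "inf f x \<le> a" "inf g x \<le> b" "f \<in> M" "g \<in> M" for a b f g
  proof -
    have "inf (inf f g) x \<le> inf f x" "inf (inf f g) x \<le> inf g x"
      by (rule inf.mono; simp)+
    then have "inf (inf f g) x \<le> inf a b"
      using order_trans[OF _ that(1)] order_trans[OF _ that(2)] by (simp only: le_inf_iff)
    then show ?thesis using that(3,4) is_filter_inf[OF assms] by blast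
  qed
  then show ?thesis
    unfolding is_filter_def using is_filter_top[OF assms]
    by (auto intro: order_trans)
qed

lemma maximal_proper_filter_prime:
  assumes filter: "is_filter M" and proper: "bot \<notin> M"
    and maximal: "\<And>F. is_filter F \<Longrightarrow> bot \<notin> F \<Longrightarrow> M \<subseteq> F \<Longrightarrow> F = M"
  shows "prime_filter M"
proof -
  have disjoint: "\<exists>f\<in>M. inf f x = bot" if "x \<notin> M" for x
  proof (rule ccontr)
    assume no_disjoint: "\<not> (\<exists>f\<in>M. inf f x = bot)"
    let ?M = "{z. \<exists>f\<in>M. inf f x \<le> z}"
    have "bot \<notin> ?M" using no_disjoint by (auto simp: bot_unique)
    moreover have "M \<subseteq> ?M" by (auto intro: inf.coboundedI1)
    ultimately have "?M = M" using maximal is_filter_extend[OF filter] by blast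
    moreover have "x \<in> ?M" using is_filter_top[OF filter] by auto
    ultimately show False using that by blast
  qed
  have "x \<in> M \<or> y \<in> M" if "sup x y \<in> M" for x y
  proof (rule ccontr)
    assume "\<not> (x \<in> M \<or> y \<in> M)"
    then obtain f g where fg: "f \<in> M" "g \<in> M" "inf f x = bot" "inf g y = bot"
      using disjoint by blast
    have "inf (inf f g) (sup x y) = sup (inf g (inf f x)) (inf f (inf g y))"
      by (simp add: inf_sup_distrib1 ac_simps)
    also have "\<dots> = bot" using fg by simp
    finally have "inf (inf f g) (sup x y) = bot" .
    moreover have "inf (inf f g) (sup x y) \<in> M"
      using fg(1,2) that by (intro is_filter_inf[OF filter])
    ultimately show False using proper by simp
  qed
  then show ?thesis using filter proper unfolding prime_filter_def by blast
qed

lemma is_filter_Union_chain: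
  assumes "C \<noteq> {}" "\<And>F. F \<in> C \<Longrightarrow> is_filter F" "chain\<^sub>\<subseteq> C"
  shows "is_filter (\<Union>C)"
  unfolding is_filter_def
proof (intro conjI allI impI)
  show "\<Union>C \<noteq> {}" using assms(1,2) is_filter_top by blast
next
  fix x y assume "x \<in> \<Union>C \<and> x \<le> y"
  then show "y \<in> \<Union>C" using assms(2) is_filter_mono by blast
next
  fix x y assume "x \<in> \<Union>C \<and> y \<in> \<Union>C"
  then obtain F G where "F \<in> C" "G \<in> C" "x \<in> F" "y \<in> G" by blast
  moreover from this have "F \<subseteq> G \<or> G \<subseteq> F" using assms(3) unfolding chain_subset_def by blast
  ultimately show "inf x y \<in> \<Union>C" using assms(2) is_filter_inf by blast
qed

lemma proper_filter_extends_to_prime: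
  assumes "is_filter F\<^sub>0" "bot \<notin> F\<^sub>0"
  shows "\<exists>F. prime_filter F \<and> F\<^sub>0 \<subseteq> F"
proof -
  define P where "P = {F. is_filter F \<and> bot \<notin> F \<and> F\<^sub>0 \<subseteq> F}"
  have chain_bound: "\<exists>U\<in>P. \<forall>F\<in>C. F \<subseteq> U" if "C \<in> chains P" for C
  proof (cases "C = {}")
    case True
    then show ?thesis using assms unfolding P_def by auto
  next
    case False
    have "C \<subseteq> P" "chain\<^sub>\<subseteq> C" using that unfolding chains_def by simp_all
    then have "is_filter (\<Union>C)" "bot \<notin> \<Union>C" "F\<^sub>0 \<subseteq> \<Union>C"
      using is_filter_Union_chain[OF False] False unfolding P_def by auto
    then have "\<Union>C \<in> P" unfolding P_def by simp
    then show ?thesis by blast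
  qed
  obtain M where "M \<in> P" and maximal: "\<forall>F\<in>P. M \<subseteq> F \<longrightarrow> F = M"
    using Zorn_Lemma2[OF ballI[OF chain_bound]] by blast
  have "prime_filter M"
  proof (rule maximal_proper_filter_prime)
    fix F assume "is_filter F" "bot \<notin> F" "M \<subseteq> F"
    then show "F = M" using maximal \<open>M \<in> P\<close> unfolding P_def by blast
  qed (use \<open>M \<in> P\<close> in \<open>simp_all add: P_def\<close>)
  with \<open>M \<in> P\<close> show ?thesis unfolding P_def by blast
qed

fun rs_chain :: "'a::boolean_algebra \<Rightarrow> (nat \<Rightarrow> 'a set) \<Rightarrow> nat \<Rightarrow> 'a" where
  "rs_chain a X 0 = a"
| "rs_chain a X (Suc n) = (if \<exists>x\<in>X n. inf (rs_chain a X n) (- x) \<noteq> bot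
     then inf (rs_chain a X n) (- (SOME x. x \<in> X n \<and> inf (rs_chain a X n) (- x) \<noteq> bot))
     else rs_chain a X n)"

lemma rs_chain_nonzero:
  assumes "a \<noteq> bot"
  shows "rs_chain a X n \<noteq> bot"
proof (induction n)
  case 0
  then show ?case using assms by simp
next
  case (Suc n)
  let ?P = "\<lambda>x. x \<in> X n \<and> inf (rs_chain a X n) (- x) \<noteq> bot"
  show ?case
    using Suc someI_ex[of ?P] by auto
qed

lemma antimono_rs_chain: "antimono (rs_chain a X)"
  unfolding antimono_iff_le_Suc by simp

lemma rs_chain_decides:
  "(\<forall>x\<in>X n. rs_chain a X n \<le> x) \<or> (\<exists>x\<in>X n. rs_chain a X (Suc n) \<le> - x)"
proof (cases "\<exists>x\<in>X n. inf (rs_chain a X n) (- x) \<noteq> bot")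
  case True
  let ?P = "\<lambda>x. x \<in> X n \<and> inf (rs_chain a X n) (- x) \<noteq> bot"
  have "(SOME x. ?P x) \<in> X n" using True someI_ex[of ?P] by blast
  moreover have "rs_chain a X (Suc n) \<le> - (SOME x. ?P x)" using True by simp
  ultimately show ?thesis by blast
next
  case False
  then show ?thesis by (simp add: inf_shunt)
qed

lemma is_filter_antimono_upset:
  fixes c :: "nat \<Rightarrow> 'a::boolean_algebra"
  assumes "antimono c"
  shows "is_filter {y. \<exists>n. c n \<le> y}"
  unfolding is_filter_def
proof (intro conjI allI impI)
  fix x y assume "x \<in> {y. \<exists>n. c n \<le> y} \<and> y \<in> {y. \<exists>n. c n \<le> y}"
  then obtain m n where "c m \<le> x" "c n \<le> y" by auto
  then have "c (max m n) \<le> x" "c (max m n) \<le> y"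
    using antimonoD[OF assms, of m "max m n"] antimonoD[OF assms, of n "max m n"] by auto
  then show "inf x y \<in> {y. \<exists>n. c n \<le> y}" by auto
qed (auto intro: order_trans)

lemma Q_filter_containing:
  assumes "a \<noteq> bot" "countable S"
  shows "\<exists>F. Q_filter S F \<and> a \<in> F"
proof -
  define X where "X = from_nat_into S"
  let ?c = "rs_chain a X"
  have "is_filter {y. \<exists>n. ?c n \<le> y}"
    by (rule is_filter_antimono_upset[OF antimono_rs_chain])
  moreover have "bot \<notin> {y. \<exists>n. ?c n \<le> y}"
    using rs_chain_nonzero[OF assms(1)] by (simp add: bot_unique)
  ultimately obtain F where prime: "prime_filter F" and upset: "{y. \<exists>n. ?c n \<le> y} \<subseteq> F"
    by (blast dest: proper_filter_extends_to_prime)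
  have chain_in_F: "?c n \<in> F" for n
    using upset by blast
  have filter: "is_filter F" and proper: "bot \<notin> F"
    using prime unfolding prime_filter_def by auto
  have "m \<in> F" if "Y \<in> S" "is_meet Y m" "Y \<subseteq> F" for Y m
  proof -
    obtain n where n: "Y = X n"
      using subset_range_from_nat_into[OF assms(2)] \<open>Y \<in> S\<close> unfolding X_def by auto
    from rs_chain_decides[of X n a] show "m \<in> F"
    proof
      assume "\<forall>x\<in>X n. ?c n \<le> x"
      then have "?c n \<le> m" using \<open>is_meet Y m\<close> n unfolding is_meet_def by simp
      then show ?thesis using is_filter_mono[OF filter chain_in_F] by simp
    next
      assume "\<exists>x\<in>X n. ?c (Suc n) \<le> - x"
      then obtain x where "x \<in> Y" "?c (Suc n) \<le> - x" using n by blast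
      then have "x \<in> F" "- x \<in> F"
        using \<open>Y \<subseteq> F\<close> is_filter_mono[OF filter chain_in_F] by blast+
      then have "bot \<in> F" using is_filter_inf[OF filter] by fastforce
      with proper show ?thesis by blast
    qed
  qed
  then have "Q_filter S F" using prime unfolding Q_filter_def by blast
  moreover have "a \<in> F" using chain_in_F[of 0] by simp
  ultimately show ?thesis by blast
qed

lemma Q_S_nonempty:
  assumes "(bot::'a::boolean_algebra) \<noteq> top" "countable (S :: 'a set set)"
  shows "Q_S S \<noteq> {}"
  using Q_filter_containing[of top S] assms unfolding Q_S_def by auto

lemma nbhd_frame_V_A:
  "Q_S S \<noteq> {} \<Longrightarrow> nbhd_frame (Q_S S) (V_A box S)"
  unfolding nbhd_frame_def V_A_def by auto

lemma monotonic_frame_V_A: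
  "Q_S S \<noteq> {} \<Longrightarrow> monotonic_frame (Q_S S) (V_A box S)"
  unfolding monotonic_frame_def using nbhd_frame_V_A by (simp add: V_A_def) blast

lemma topped_frame_V_A:
  assumes "Q_S S \<noteq> {}" "topped_ma box"
  shows "topped_frame (Q_S S) (V_A box S)"
proof -
  have "Q_S S \<in> V_A box S F" if "F \<in> Q_S S" for F
    using assms(2) is_filter_top[OF Q_S_is_filter[OF that]]
    unfolding topped_ma_def V_A_def by (auto intro!: exI[of _ top])
  then show ?thesis
    unfolding topped_frame_def using nbhd_frame_V_A[OF assms(1)] by blast
qed

lemma V_A_Int:
  assumes "cufi_ma box" "F \<in> Q_S S" "U \<in> V_A box S F" "W \<in> V_A box S F"
  shows "U \<inter> W \<in> V_A box S F"
proof -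
  obtain x y where "box x \<in> F" "{G \<in> Q_S S. x \<in> G} \<subseteq> U"
    and "box y \<in> F" "{G \<in> Q_S S. y \<in> G} \<subseteq> W" and "U \<subseteq> Q_S S"
    using assms(3,4) unfolding V_A_def by blast
  moreover have "box (inf x y) \<in> F"
    using assms(1) Q_S_is_filter[OF assms(2)] \<open>box x \<in> F\<close> \<open>box y \<in> F\<close>
    unfolding cufi_ma_def by (meson is_filter_inf is_filter_mono)
  moreover have "{G \<in> Q_S S. inf x y \<in> G} \<subseteq> {G \<in> Q_S S. x \<in> G} \<inter> {G \<in> Q_S S. y \<in> G}"
    using Q_S_is_filter is_filter_inf_iff by blast
  ultimately show ?thesis unfolding V_A_def by blast
qed

lemma cufi_frame_V_A:
  assumes "Q_S S \<noteq> {}" "cufi_ma box"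
  shows "cufi_frame (Q_S S) (V_A box S)"
proof -
  have "\<Inter>T \<in> V_A box S F"
    if "F \<in> Q_S S" "finite T" "T \<noteq> {}" "T \<subseteq> V_A box S F" for F T
    using that(2-4)
    by (induction T rule: finite_ne_induct) (auto intro: V_A_Int[OF assms(2) that(1)])
  then show ?thesis
    unfolding cufi_frame_def using nbhd_frame_V_A[OF assms(1)] by blast
qed

theorem mainTheorem1:
  fixes box :: "'a::boolean_algebra \<Rightarrow> 'a" and S :: "'a set set"
  assumes nontrivial: "(bot::'a) \<noteq> top"
    and mono: "monotonic_ma box"
    and cnt: "countable S"
  shows "monotonic_frame (Q_S S) (V_A box S)
    \<and> (topped_ma box \<longrightarrow> topped_frame (Q_S S) (V_A box S))
    \<and> (cufi_ma box \<longrightarrow> cufi_frame (Q_S S) (V_A box S))"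
  using Q_S_nonempty[OF nontrivial cnt]
    monotonic_frame_V_A topped_frame_V_A cufi_frame_V_A by blast

end
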